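(* Let $0<\epsilon,\delta,\lambda<1$, $F=1-\epsilon$, $\nu=1-\lambda$, $k_+=\lceil\log_\lambda\delta\rceil$, $k_-=\lfloor\log_\lambda\delta\rfloor$. Then $$k_-+\Big\lceil\frac{k_-F}{\lambda\epsilon}\Big\rceil\le N(\epsilon,\delta,\lambda)\le k_++\Big\lceil\frac{k_+F}{\lambda\epsilon}\Big\rceil,$$ $$N(\epsilon,\delta,\lambda)\le\Big\lceil\frac{\log_\lambda\delta}{\lambda\epsilon}-\frac{\nu k_-}{\lambda}\Big\rceil=\Big\lceil\frac{\ln\delta}{\lambda\epsilon\ln\lambda}-\frac{\nu k_-}{\lambda}\Big\rceil.$$ All three bounds are saturated when $\log_\lambda\delta$ is an integer.
   Context: Let $\mathcal H$ be a Hilbert space of finite dimension $D\ge 2$ and $|\Psi\rangle\in\mathcal H$ a unit vector. For $0\le\lambda<1$ let $\Omega_\lambda=|\Psi\rangle\langle\Psi|+\lambda(1-|\Psi\rangle\langle\Psi|)$. For an integer $N\ge1$ and a density operator $\rho$ on $\mathcal H^{\otimes(N+1)}$ put $p_\rho=\mathrm{tr}[(\Omega_\lambda^{\otimes N}\otimes 1)\rho]$ and $f_\rho=\mathrm{tr}[(\Omega_\lambda^{\otimes N}\otimes|\Psi\rangle\langle\Psi|)\rho]$. Define $F(N,\delta,\lambda)=\min\{f_\rho/p_\rho: p_\rho\ge\delta\}$ for $0<\delta\le1$, the minimum over permutation-invariant density operators on $\mathcal H^{\otimes(N+1)}$, and for $0<\epsilon,\delta<1$ let $N(\epsilon,\delta,\lambda)=\min\{N\ge1: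 F(N,\delta,\lambda)\ge1-\epsilon\}$. *)

theory Defs
  imports "HOL-Analysis.Analysis" "HOL-Combinatorics.Permutations"
begin

text \<open>The Hilbert space H = C^D with computational basis {0..<D}.
  H^{\<otimes> m} has orthonormal basis indexed by lists xs of length m with entries < D.
  Operators on H^{\<otimes> m} are given by their matrix entries A xs ys in this basis.\<close>

type_synonym op = "nat list \<Rightarrow> nat list \<Rightarrow> complex"

definition basis :: "nat \<Rightarrow> nat \<Rightarrow> nat list set" where
  "basis D m = {xs. length xs = m \<and> set xs \<subseteq> {..<D}}"

definition unit_vec :: "nat \<Rightarrow> (nat \<Rightarrow> complex) \<Rightarrow> bool" where
  "unit_vec D psi \<longleftrightarrow> (\<Sum>i<D. (cmod (psi i))\<^sup>2) = 1"

definition proj :: "(nat \<Rightarrow> complex) \<Rightarrow> nat \<Rightarrow> nat \<Rightarrow> complex" where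
  "proj psi i j = psi i * cnj (psi j)"

definition Omega :: "(nat \<Rightarrow> complex) \<Rightarrow> real \<Rightarrow> nat \<Rightarrow> nat \<Rightarrow> complex" where
  "Omega psi lam i j = proj psi i j + of_real lam * ((if i = j then 1 else 0) - proj psi i j)"

definition id_op :: "nat \<Rightarrow> nat \<Rightarrow> complex" where
  "id_op i j = (if i = j then 1 else 0)"

definition tensor_pow_with :: "(nat \<Rightarrow> nat \<Rightarrow> complex) \<Rightarrow> nat \<Rightarrow> (nat \<Rightarrow> nat \<Rightarrow> complex) \<Rightarrow> op" where
  "tensor_pow_with A N B xs ys = (\<Prod>k<N. A (xs ! k) (ys ! k)) * B (xs ! N) (ys ! N)"

definition trace_prod :: "nat \<Rightarrow> nat \<Rightarrow> op \<Rightarrow> op \<Rightarrow> complex" where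
  "trace_prod D m A rho = (\<Sum>xs\<in>basis D m. \<Sum>ys\<in>basis D m. A xs ys * rho ys xs)"

definition density_op :: "nat \<Rightarrow> nat \<Rightarrow> op \<Rightarrow> bool" where
  "density_op D m rho \<longleftrightarrow>
     (\<forall>v :: nat list \<Rightarrow> complex.
        let q = (\<Sum>xs\<in>basis D m. \<Sum>ys\<in>basis D m. cnj (v xs) * rho xs ys * v ys)
        in Im q = 0 \<and> Re q \<ge> 0)
   \<and> (\<Sum>xs\<in>basis D m. rho xs xs) = 1"

definition perm_list :: "(nat \<Rightarrow> nat) \<Rightarrow> nat list \<Rightarrow> nat list" where
  "perm_list p xs = map (\<lambda>i. xs ! p i) [0..<length xs]"

definition perm_inv :: "nat \<Rightarrow> nat \<Rightarrow> op \<Rightarrow> bool" where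
  "perm_inv D m rho \<longleftrightarrow>
     (\<forall>p. p permutes {..<m} \<longrightarrow>
        (\<forall>xs\<in>basis D m. \<forall>ys\<in>basis D m. rho (perm_list p xs) (perm_list p ys) = rho xs ys))"

definition p_rho :: "nat \<Rightarrow> (nat \<Rightarrow> complex) \<Rightarrow> real \<Rightarrow> nat \<Rightarrow> op \<Rightarrow> real" where
  "p_rho D psi lam N rho = Re (trace_prod D (N+1) (tensor_pow_with (Omega psi lam) N id_op) rho)"

definition f_rho :: "nat \<Rightarrow> (nat \<Rightarrow> complex) \<Rightarrow> real \<Rightarrow> nat \<Rightarrow> op \<Rightarrow> real" where
  "f_rho D psi lam N rho = Re (trace_prod D (N+1) (tensor_pow_with (Omega psi lam) N (proj psi)) rho)"

text \<open>F(N,delta,lambda): the minimum (written as infimum; it is attained) of f/p.\<close>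
definition Fid :: "nat \<Rightarrow> (nat \<Rightarrow> complex) \<Rightarrow> nat \<Rightarrow> real \<Rightarrow> real \<Rightarrow> real" where
  "Fid D psi N delta lam = Inf {f_rho D psi lam N rho / p_rho D psi lam N rho | rho.
      density_op D (N+1) rho \<and> perm_inv D (N+1) rho \<and> p_rho D psi lam N rho \<ge> delta}"

definition Nmin :: "nat \<Rightarrow> (nat \<Rightarrow> complex) \<Rightarrow> real \<Rightarrow> real \<Rightarrow> real \<Rightarrow> nat" where
  "Nmin D psi eps delta lam = (LEAST N. N \<ge> 1 \<and> Fid D psi N delta lam \<ge> 1 - eps)"

end

theory Submission
  imports Defs
begin

(* Write P = |Psi><Psi|, so that Omega = P + lam (1 - P). Expanding every tensor factor of
   Omega^N (x) 1 and Omega^N (x) P in P and 1 - P, and averaging over the position of the last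
   factor (rho is permutation invariant), p and f become linear in the weights tr(Pi_S rho) >= 0
   of the projectors Pi_S that are 1 - P on the sites in S and P elsewhere, with coefficients
   depending only on k = |S|. Conversely, symmetric mixtures of the Pi_S realise every
   distribution of k. Hence F(N, delta, lam) >= F is a linear programme in the distribution of k:
   a Lagrange multiplier mu >= 0 certifies it, and a mixture of two neighbouring levels k, k + 1
   refutes it. The bounds on N come from explicit choices of mu and of the two levels, and reduce
   to Bernoulli's inequality for lam ^ k and, for the logarithmic bound, for lam powr s with s the
   fractional part of log_lam delta. *)

type_synonym site_op = "nat \<Rightarrow> nat \<Rightarrow> complex"

definition tensor_op :: "nat \<Rightarrow> (nat \<Rightarrow> site_op) \<Rightarrow> op" where
  "tensor_op m As xs ys = (\<Prod>i<m. As i (xs ! i) (ys ! i))"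

definition site_trace :: "nat \<Rightarrow> site_op \<Rightarrow> site_op \<Rightarrow> complex" where
  "site_trace D A B = (\<Sum>x<D. \<Sum>y<D. A x y * B y x)"

lemma basis_0: "basis D 0 = {[]}"
  by (auto simp: basis_def)

lemma basis_Suc: "basis D (Suc m) = (\<lambda>(xs, x). xs @ [x]) ` (basis D m \<times> {..<D})"
proof (rule set_eqI, rule iffI)
  fix ys assume "ys \<in> basis D (Suc m)"
  then have "length ys = Suc m" and "set ys \<subseteq> {..<D}" by (auto simp: basis_def)
  moreover obtain xs x where "ys = xs @ [x]"
    using \<open>length ys = Suc m\<close> by (metis length_Suc_conv_rev)
  ultimately show "ys \<in> (\<lambda>(xs, x). xs @ [x]) ` (basis D m \<times> {..<D})"
    by (auto simp: basis_def image_iff)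
qed (auto simp: basis_def)

lemma finite_basis [simp]: "finite (basis D m)"
  by (induction m) (auto simp: basis_0 basis_Suc)

lemma length_basis: "xs \<in> basis D m \<Longrightarrow> length xs = m"
  by (simp add: basis_def)

lemma nth_basis_less: "xs \<in> basis D m \<Longrightarrow> i < m \<Longrightarrow> xs ! i < D"
  unfolding basis_def using nth_mem by fastforce

lemma sum_basis_Suc:
  "(\<Sum>xs\<in>basis D (Suc m). g xs) = (\<Sum>xs\<in>basis D m. \<Sum>x<D. g (xs @ [x]))"
proof -
  have "inj_on (\<lambda>(xs, x). xs @ [x]) (basis D m \<times> {..<D})"
    by (auto simp: inj_on_def)
  then show ?thesis
    unfolding basis_Suc by (subst sum.reindex) (simp_all add: sum.cartesian_product split_def)
qed

lemma sum_basis_prod: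
  fixes h :: "nat \<Rightarrow> nat \<Rightarrow> 'a::comm_semiring_1"
  shows "(\<Sum>xs\<in>basis D m. \<Prod>i<m. h i (xs ! i)) = (\<Prod>i<m. \<Sum>x<D. h i x)"
proof (induction m)
  case 0
  then show ?case by (simp add: basis_0)
next
  case (Suc m)
  have "(\<Prod>i<Suc m. h i ((xs @ [x]) ! i)) = (\<Prod>i<m. h i (xs ! i)) * h m x"
    if "xs \<in> basis D m" for xs x
    using length_basis[OF that] by (simp add: nth_append)
  then have "(\<Sum>xs\<in>basis D (Suc m). \<Prod>i<Suc m. h i (xs ! i))
      = (\<Sum>xs\<in>basis D m. \<Sum>x<D. (\<Prod>i<m. h i (xs ! i)) * h m x)"
    by (simp add: sum_basis_Suc)
  also have "\<dots> = (\<Sum>xs\<in>basis D m. \<Prod>i<m. h i (xs ! i)) * (\<Sum>x<D. h m x)"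
    by (simp add: sum_distrib_left sum_distrib_right sum.swap[of _ "basis D m"])
  finally show ?case
    using Suc by simp
qed

lemma trace_prod_tensor_op:
  "trace_prod D m (tensor_op m As) (tensor_op m Bs) = (\<Prod>i<m. site_trace D (As i) (Bs i))"
proof -
  have "trace_prod D m (tensor_op m As) (tensor_op m Bs)
      = (\<Sum>xs\<in>basis D m. \<Prod>i<m. \<Sum>y<D. As i (xs ! i) y * Bs i y (xs ! i))"
    unfolding trace_prod_def tensor_op_def prod.distrib[symmetric]
    by (intro sum.cong refl sum_basis_prod)
  also have "\<dots> = (\<Prod>i<m. site_trace D (As i) (Bs i))"
    unfolding site_trace_def by (rule sum_basis_prod)
  finally show ?thesis .
qed

lemma trace_prod_sum_left:
  "trace_prod D m (\<lambda>xs ys. \<Sum>S\<in>A. c S * T S xs ys) rho = (\<Sum>S\<in>A. c S * trace_prod D m (T S) rho)"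
  unfolding trace_prod_def
  by (simp add: sum_distrib_right sum_distrib_left mult_ac sum.swap[of _ A])

lemma trace_prod_sum_right:
  "trace_prod D m A (\<lambda>xs ys. \<Sum>S\<in>B. c S * T S xs ys) = (\<Sum>S\<in>B. c S * trace_prod D m A (T S))"
  unfolding trace_prod_def
  by (simp add: sum_distrib_right sum_distrib_left mult_ac sum.swap[of _ B])

section \<open>Positivity through Gram factorisations\<close>

definition psd_op :: "nat \<Rightarrow> nat \<Rightarrow> op \<Rightarrow> bool" where
  "psd_op D m rho \<longleftrightarrow> (\<forall>v :: nat list \<Rightarrow> complex.
      let q = (\<Sum>xs\<in>basis D m. \<Sum>ys\<in>basis D m. cnj (v xs) * rho xs ys * v ys)
      in Im q = 0 \<and> Re q \<ge> 0)"

lemma density_op_iff_psd_op: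
  "density_op D m rho \<longleftrightarrow> psd_op D m rho \<and> (\<Sum>xs\<in>basis D m. rho xs xs) = 1"
  unfolding density_op_def psd_op_def ..

lemma psd_op_diag_real:
  assumes "psd_op D m rho" "xs \<in> basis D m"
  shows "Im (rho xs xs) = 0"
proof -
  let ?v = "\<lambda>ys. if ys = xs then (1::complex) else 0"
  have "(\<Sum>ys\<in>basis D m. \<Sum>zs\<in>basis D m. cnj (?v ys) * rho ys zs * ?v zs)
      = (\<Sum>ys\<in>basis D m. \<Sum>zs\<in>basis D m. if zs = xs then (if ys = xs then rho ys zs else 0) else 0)"
    by (intro sum.cong refl) simp
  also have "\<dots> = rho xs xs"
    using assms(2) by simp
  finally have "(\<Sum>ys\<in>basis D m. \<Sum>zs\<in>basis D m. cnj (?v ys) * rho ys zs * ?v zs) = rho xs xs" .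
  with conjunct1[OF spec[OF assms(1)[unfolded psd_op_def Let_def], of ?v]] show ?thesis
    by simp
qed

lemma density_op_of_psd_op:
  assumes "psd_op D m rho" "Re (\<Sum>xs\<in>basis D m. rho xs xs) = 1"
  shows "density_op D m rho"
proof -
  have "Im (\<Sum>xs\<in>basis D m. rho xs xs) = 0"
    using psd_op_diag_real[OF assms(1)] by (simp add: Im_sum)
  then show ?thesis
    using assms by (simp add: density_op_iff_psd_op complex_eq_iff)
qed

lemma psd_op_sum:
  assumes "\<And>S. S \<in> A \<Longrightarrow> psd_op D m (T S)" "\<And>S. S \<in> A \<Longrightarrow> c S \<ge> 0"
  shows "psd_op D m (\<lambda>xs ys. \<Sum>S\<in>A. of_real (c S) * T S xs ys)"
  unfolding psd_op_def Let_def
proof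
  fix v :: "nat list \<Rightarrow> complex"
  let ?q = "\<lambda>S. \<Sum>xs\<in>basis D m. \<Sum>ys\<in>basis D m. cnj (v xs) * T S xs ys * v ys"
  let ?lhs = "\<Sum>xs\<in>basis D m. \<Sum>ys\<in>basis D m. cnj (v xs) * (\<Sum>S\<in>A. of_real (c S) * T S xs ys) * v ys"
  have "?lhs = (\<Sum>xs\<in>basis D m. \<Sum>ys\<in>basis D m. \<Sum>S\<in>A. of_real (c S) * (cnj (v xs) * T S xs ys * v ys))"
    by (intro sum.cong refl) (simp add: sum_distrib_left sum_distrib_right mult.assoc mult.left_commute)
  also have "\<dots> = (\<Sum>xs\<in>basis D m. \<Sum>S\<in>A. \<Sum>ys\<in>basis D m. of_real (c S) * (cnj (v xs) * T S xs ys * v ys))"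
    by (rule sum.cong[OF refl], rule sum.swap)
  also have "\<dots> = (\<Sum>S\<in>A. \<Sum>xs\<in>basis D m. \<Sum>ys\<in>basis D m. of_real (c S) * (cnj (v xs) * T S xs ys * v ys))"
    by (rule sum.swap)
  also have "\<dots> = (\<Sum>S\<in>A. of_real (c S) * ?q S)"
    by (simp add: sum_distrib_left)
  finally have eq: "?lhs = (\<Sum>S\<in>A. of_real (c S) * ?q S)" .
  have "Im (of_real (c S) * ?q S) = 0 \<and> Re (of_real (c S) * ?q S) \<ge> 0" if "S \<in> A" for S
    using assms(1)[OF that] assms(2)[OF that] unfolding psd_op_def Let_def by simp
  then show "Im ?lhs = 0 \<and> 0 \<le> Re ?lhs"
    unfolding eq Im_sum Re_sum by (auto intro: sum.neutral sum_nonneg)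
qed

lemma psd_op_gram:
  assumes A: "\<And>xs ys. xs \<in> basis D m \<Longrightarrow> ys \<in> basis D m \<Longrightarrow> A xs ys = (\<Sum>j\<in>J. w j xs * cnj (w j ys))"
  shows "psd_op D m A"
  unfolding psd_op_def Let_def
proof
  fix v :: "nat list \<Rightarrow> complex"
  define z where "z j = (\<Sum>xs\<in>basis D m. cnj (v xs) * w j xs)" for j
  have "(\<Sum>xs\<in>basis D m. \<Sum>ys\<in>basis D m. cnj (v xs) * A xs ys * v ys)
      = (\<Sum>xs\<in>basis D m. \<Sum>ys\<in>basis D m. \<Sum>j\<in>J. cnj (v xs) * w j xs * (cnj (w j ys) * v ys))"
    by (intro sum.cong refl) (simp add: A sum_distrib_left sum_distrib_right mult.assoc)
  also have "\<dots> = (\<Sum>xs\<in>basis D m. \<Sum>j\<in>J. \<Sum>ys\<in>basis D m. cnj (v xs) * w j xs * (cnj (w j ys) * v ys))"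
    by (rule sum.cong[OF refl], rule sum.swap)
  also have "\<dots> = (\<Sum>j\<in>J. \<Sum>xs\<in>basis D m. \<Sum>ys\<in>basis D m. cnj (v xs) * w j xs * (cnj (w j ys) * v ys))"
    by (rule sum.swap)
  also have "\<dots> = (\<Sum>j\<in>J. z j * cnj (z j))"
    unfolding z_def cnj_sum sum_product by (simp add: mult_ac)
  also have "\<dots> = of_real (\<Sum>j\<in>J. (Re (z j))\<^sup>2 + (Im (z j))\<^sup>2)"
    by (simp add: complex_mult_cnj)
  finally show "Im (\<Sum>xs\<in>basis D m. \<Sum>ys\<in>basis D m. cnj (v xs) * A xs ys * v ys) = 0 \<and>
      0 \<le> Re (\<Sum>xs\<in>basis D m. \<Sum>ys\<in>basis D m. cnj (v xs) * A xs ys * v ys)"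
    by (simp add: sum_nonneg)
qed

lemma Re_trace_prod_gram_nonneg:
  assumes A: "\<And>xs ys. xs \<in> basis D m \<Longrightarrow> ys \<in> basis D m \<Longrightarrow> A xs ys = (\<Sum>j\<in>J. w j xs * cnj (w j ys))"
    and rho: "psd_op D m rho"
  shows "Re (trace_prod D m A rho) \<ge> 0"
proof -
  have "trace_prod D m A rho
      = (\<Sum>xs\<in>basis D m. \<Sum>ys\<in>basis D m. \<Sum>j\<in>J. cnj (w j ys) * rho ys xs * w j xs)"
    unfolding trace_prod_def by (intro sum.cong refl) (simp add: A sum_distrib_left mult.commute mult.left_commute)
  also have "\<dots> = (\<Sum>ys\<in>basis D m. \<Sum>xs\<in>basis D m. \<Sum>j\<in>J. cnj (w j ys) * rho ys xs * w j xs)"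
    by (rule sum.swap)
  also have "\<dots> = (\<Sum>ys\<in>basis D m. \<Sum>j\<in>J. \<Sum>xs\<in>basis D m. cnj (w j ys) * rho ys xs * w j xs)"
    by (rule sum.cong[OF refl], rule sum.swap)
  also have "\<dots> = (\<Sum>j\<in>J. \<Sum>ys\<in>basis D m. \<Sum>xs\<in>basis D m. cnj (w j ys) * rho ys xs * w j xs)"
    by (rule sum.swap)
  finally have "trace_prod D m A rho = \<dots>" .
  moreover have "Re (\<Sum>ys\<in>basis D m. \<Sum>xs\<in>basis D m. cnj (w j ys) * rho ys xs * w j xs) \<ge> 0" for j
    using rho unfolding psd_op_def Let_def by blast
  ultimately show ?thesis
    by (simp add: Re_sum sum_nonneg)
qed

definition gram_factor :: "nat \<Rightarrow> site_op \<Rightarrow> site_op \<Rightarrow> bool" where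
  "gram_factor D u A \<longleftrightarrow> (\<forall>x<D. \<forall>y<D. A x y = (\<Sum>j<D. u j x * cnj (u j y)))"

lemma tensor_op_gram_factor:
  assumes u: "\<And>i. i < m \<Longrightarrow> gram_factor D (us i) (As i)"
    and xs: "xs \<in> basis D m" and ys: "ys \<in> basis D m"
  shows "tensor_op m As xs ys = (\<Sum>js\<in>basis D m. tensor_op m us js xs * cnj (tensor_op m us js ys))"
proof -
  have "tensor_op m As xs ys = (\<Prod>i<m. \<Sum>j<D. us i j (xs ! i) * cnj (us i j (ys ! i)))"
    unfolding tensor_op_def using u nth_basis_less[OF xs] nth_basis_less[OF ys]
    by (intro prod.cong refl) (auto simp: gram_factor_def)
  also have "\<dots> = (\<Sum>js\<in>basis D m. \<Prod>i<m. us i (js ! i) (xs ! i) * cnj (us i (js ! i) (ys ! i)))"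
    by (rule sum_basis_prod[symmetric])
  finally show ?thesis
    unfolding tensor_op_def prod.distrib cnj_prod .
qed

lemma length_perm_list [simp]: "length (perm_list p xs) = length xs"
  by (simp add: perm_list_def)

lemma nth_perm_list [simp]: "i < length xs \<Longrightarrow> perm_list p xs ! i = xs ! p i"
  by (simp add: perm_list_def)

lemma perm_list_in_basis:
  assumes p: "p permutes {..<m}" and xs: "xs \<in> basis D m"
  shows "perm_list p xs \<in> basis D m"
proof -
  have "xs ! p i < D" if "i < m" for i
    using nth_basis_less[OF xs] permutes_in_image[OF p] that by simp
  then show ?thesis
    using length_basis[OF xs] by (auto simp: basis_def in_set_conv_nth)
qed

lemma perm_list_inv:
  assumes p: "p permutes {..<m}" and "length xs = m"
  shows "perm_list p (perm_list (inv p) xs) = xs"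
  using assms permutes_in_image[OF p] by (intro nth_equalityI) (simp_all add: permutes_inverses)

lemma bij_betw_perm_list:
  assumes p: "p permutes {..<m}"
  shows "bij_betw (perm_list p) (basis D m) (basis D m)"
proof (rule bij_betw_byWitness[where f' = "perm_list (inv p)"])
  have ip: "inv p permutes {..<m}"
    using p by (rule permutes_inv)
  show "\<forall>xs\<in>basis D m. perm_list (inv p) (perm_list p xs) = xs"
    using perm_list_inv[OF ip] permutes_inv_inv[OF p] by (auto simp: basis_def)
  show "\<forall>xs\<in>basis D m. perm_list p (perm_list (inv p) xs) = xs"
    using perm_list_inv[OF p] by (auto simp: basis_def)
  show "perm_list p ` basis D m \<subseteq> basis D m" "perm_list (inv p) ` basis D m \<subseteq> basis D m"
    using perm_list_in_basis[OF p] perm_list_in_basis[OF ip] by auto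
qed

lemma tensor_op_perm_list:
  assumes p: "p permutes {..<m}" and "length xs = m" "length ys = m"
  shows "tensor_op m As (perm_list p xs) (perm_list p ys) = tensor_op m (\<lambda>j. As (inv p j)) xs ys"
proof -
  have "tensor_op m As (perm_list p xs) (perm_list p ys) = (\<Prod>i<m. As (inv p (p i)) (xs ! p i) (ys ! p i))"
    unfolding tensor_op_def using assms by (simp add: permutes_inverses[OF p])
  also have "\<dots> = (\<Prod>j<m. As (inv p j) (xs ! j) (ys ! j))"
    using permutes_imp_bij[OF p] by (rule prod.reindex_bij_betw)
  finally show ?thesis
    unfolding tensor_op_def .
qed

lemma trace_prod_tensor_op_permute:
  assumes rho: "perm_inv D m rho" and s: "s permutes {..<m}"
  shows "trace_prod D m (tensor_op m As) rho = trace_prod D m (tensor_op m (\<lambda>j. As (s j))) rho"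
proof -
  define p where "p = inv s"
  have p: "p permutes {..<m}"
    unfolding p_def using s by (rule permutes_inv)
  have ip: "inv p = s"
    unfolding p_def by (rule permutes_inv_inv[OF s])
  have "trace_prod D m (tensor_op m As) rho
      = (\<Sum>xs\<in>basis D m. \<Sum>ys\<in>basis D m. tensor_op m As (perm_list p xs) (perm_list p ys)
              * rho (perm_list p ys) (perm_list p xs))"
    unfolding trace_prod_def
    by (subst sum.reindex_bij_betw[OF bij_betw_perm_list[OF p], symmetric], rule sum.cong[OF refl],
        subst sum.reindex_bij_betw[OF bij_betw_perm_list[OF p], symmetric], rule refl)
  also have "\<dots> = (\<Sum>xs\<in>basis D m. \<Sum>ys\<in>basis D m. tensor_op m (\<lambda>j. As (s j)) xs ys * rho ys xs)"
    using rho p unfolding perm_inv_def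
    by (intro sum.cong refl) (simp add: tensor_op_perm_list[OF p] basis_def ip)
  finally show ?thesis
    unfolding trace_prod_def .
qed

section \<open>Expansion in orthogonality patterns\<close>

definition proj_perp :: "(nat \<Rightarrow> complex) \<Rightarrow> site_op" where
  "proj_perp psi x y = id_op x y - proj psi x y"

definition pattern :: "(nat \<Rightarrow> complex) \<Rightarrow> nat set \<Rightarrow> nat \<Rightarrow> site_op" where
  "pattern psi S i = (if i \<in> S then proj_perp psi else proj psi)"

definition pattern_weight :: "nat \<Rightarrow> (nat \<Rightarrow> complex) \<Rightarrow> nat \<Rightarrow> op \<Rightarrow> nat set \<Rightarrow> real" where
  "pattern_weight D psi m rho S = Re (trace_prod D m (tensor_op m (pattern psi S)) rho)"

lemma unit_vec_sum_mult_cnj: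
  assumes "unit_vec D psi"
  shows "(\<Sum>j<D. psi j * cnj (psi j)) = 1"
proof -
  have "(\<Sum>j<D. psi j * cnj (psi j)) = (\<Sum>j<D. of_real ((cmod (psi j))\<^sup>2))"
    by (simp only: complex_norm_square)
  also have "\<dots> = of_real (\<Sum>j<D. (cmod (psi j))\<^sup>2)"
    by (simp only: of_real_sum)
  also have "\<dots> = 1"
    using assms by (simp only: unit_vec_def) simp
  finally show ?thesis .
qed

lemma sum_id_op_left: "x < D \<Longrightarrow> (\<Sum>j<D. id_op x j * f j) = f x"
  by (simp add: id_op_def if_distrib[where f = "\<lambda>z. z * _"] cong: if_cong)

lemma sum_id_op_right: "x < D \<Longrightarrow> (\<Sum>j<D. f j * id_op x j) = f x"
  using sum_id_op_left[of x D f] by (simp add: mult.commute)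

lemma gram_factor_proj:
  assumes "D \<ge> 1"
  shows "gram_factor D (\<lambda>j x. if j = 0 then psi x else 0) (proj psi)"
  using assms by (simp add: gram_factor_def proj_def if_distrib[where f = "\<lambda>z. z * _"] cong: if_cong)

lemma gram_factor_proj_perp:
  assumes u: "unit_vec D psi"
  shows "gram_factor D (\<lambda>j x. id_op x j - psi x * cnj (psi j)) (proj_perp psi)"
  unfolding gram_factor_def
proof (intro allI impI)
  fix x y assume x: "x < D" and y: "y < D"
  have cnj_id: "cnj (id_op y j) = id_op y j" for j
    by (simp add: id_op_def)
  have "(\<Sum>j<D. (id_op x j - psi x * cnj (psi j)) * cnj (id_op y j - psi y * cnj (psi j)))
     = (\<Sum>j<D. id_op x j * id_op y j) - (\<Sum>j<D. id_op x j * (cnj (psi y) * psi j))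
       - (\<Sum>j<D. psi x * cnj (psi j) * id_op y j) + psi x * cnj (psi y) * (\<Sum>j<D. psi j * cnj (psi j))"
    by (simp add: cnj_id algebra_simps sum.distrib sum_subtractf sum_distrib_left)
  also have "\<dots> = id_op y x - cnj (psi y) * psi x - psi x * cnj (psi y) + psi x * cnj (psi y)"
    using x y unit_vec_sum_mult_cnj[OF u] by (simp add: sum_id_op_left sum_id_op_right)
  also have "\<dots> = proj_perp psi x y"
    by (simp add: proj_perp_def proj_def id_op_def)
  finally show "proj_perp psi x y
      = (\<Sum>j<D. (id_op x j - psi x * cnj (psi j)) * cnj (id_op y j - psi y * cnj (psi j)))" ..
qed

definition pattern_factor :: "(nat \<Rightarrow> complex) \<Rightarrow> nat set \<Rightarrow> nat \<Rightarrow> site_op" where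
  "pattern_factor psi S i =
     (if i \<in> S then (\<lambda>j x. id_op x j - psi x * cnj (psi j)) else (\<lambda>j x. if j = 0 then psi x else 0))"

lemma gram_factor_pattern:
  assumes "D \<ge> 1" "unit_vec D psi"
  shows "gram_factor D (pattern_factor psi S i) (pattern psi S i)"
  using gram_factor_proj[OF assms(1)] gram_factor_proj_perp[OF assms(2)]
  by (simp add: pattern_def pattern_factor_def)

lemma psd_op_pattern:
  assumes "D \<ge> 1" "unit_vec D psi"
  shows "psd_op D m (tensor_op m (pattern psi S))"
  by (rule psd_op_gram, rule tensor_op_gram_factor[where us = "pattern_factor psi S"])
    (simp_all add: gram_factor_pattern[OF assms])

lemma pattern_weight_nonneg:
  assumes "D \<ge> 1" "unit_vec D psi" "psd_op D m rho"
  shows "pattern_weight D psi m rho S \<ge> 0"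
  unfolding pattern_weight_def
  by (rule Re_trace_prod_gram_nonneg, rule tensor_op_gram_factor[where us = "pattern_factor psi S"])
    (simp_all add: gram_factor_pattern[OF assms(1,2)] assms(3))

lemma tensor_op_expand:
  fixes a b :: "nat \<Rightarrow> real"
  shows "tensor_op m (\<lambda>i x y. of_real (a i) * proj psi x y + of_real (b i) * proj_perp psi x y)
    = (\<lambda>xs ys. \<Sum>S\<in>Pow {..<m}. of_real ((\<Prod>i\<in>S. b i) * (\<Prod>i\<in>{..<m}-S. a i)) * tensor_op m (pattern psi S) xs ys)"
proof (intro ext)
  fix xs ys
  have pattern: "tensor_op m (pattern psi S) xs ys
      = (\<Prod>i\<in>S. proj_perp psi (xs ! i) (ys ! i)) * (\<Prod>i\<in>{..<m}-S. proj psi (xs ! i) (ys ! i))"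
    if "S \<subseteq> {..<m}" for S
    unfolding tensor_op_def pattern_def using that
    by (simp add: prod.If_cases Int_absorb1 Diff_eq if_distrib[of "\<lambda>A. A _ _"] cong: if_cong)
  have "tensor_op m (\<lambda>i x y. of_real (a i) * proj psi x y + of_real (b i) * proj_perp psi x y) xs ys
      = (\<Prod>i<m. of_real (b i) * proj_perp psi (xs ! i) (ys ! i) + of_real (a i) * proj psi (xs ! i) (ys ! i))"
    unfolding tensor_op_def by (simp add: add.commute)
  also have "\<dots> = (\<Sum>S\<in>Pow {..<m}. (\<Prod>i\<in>S. of_real (b i) * proj_perp psi (xs ! i) (ys ! i))
         * (\<Prod>i\<in>{..<m}-S. of_real (a i) * proj psi (xs ! i) (ys ! i)))"
    by (rule prod_add) simp
  also have "\<dots> = (\<Sum>S\<in>Pow {..<m}. of_real ((\<Prod>i\<in>S. b i) * (\<Prod>i\<in>{..<m}-S. a i)) * tensor_op m (pattern psi S) xs ys)"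
    by (intro sum.cong refl) (simp add: pattern prod.distrib)
  finally show "tensor_op m (\<lambda>i x y. of_real (a i) * proj psi x y + of_real (b i) * proj_perp psi x y) xs ys
      = (\<Sum>S\<in>Pow {..<m}. of_real ((\<Prod>i\<in>S. b i) * (\<Prod>i\<in>{..<m}-S. a i)) * tensor_op m (pattern psi S) xs ys)" .
qed

lemma Re_trace_prod_expand:
  fixes a b :: "nat \<Rightarrow> real"
  shows "Re (trace_prod D m (tensor_op m (\<lambda>i x y. of_real (a i) * proj psi x y + of_real (b i) * proj_perp psi x y)) rho)
    = (\<Sum>S\<in>Pow {..<m}. (\<Prod>i\<in>S. b i) * (\<Prod>i\<in>{..<m}-S. a i) * pattern_weight D psi m rho S)"
proof -
  have Re_of_real_mult: "Re (of_real c * z) = c * Re z" for c z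
    by simp
  show ?thesis
    unfolding tensor_op_expand trace_prod_sum_left pattern_weight_def Re_sum Re_of_real_mult ..
qed

lemma tensor_op_id_op:
  assumes "xs \<in> basis D m" "ys \<in> basis D m"
  shows "tensor_op m (\<lambda>_. id_op) xs ys = (if xs = ys then 1 else 0)"
proof (cases "xs = ys")
  case False
  then obtain i where "i < m" "xs ! i \<noteq> ys ! i"
    using length_basis[OF assms(1)] length_basis[OF assms(2)] nth_equalityI by metis
  then show ?thesis
    using False by (auto simp: tensor_op_def id_op_def intro!: prod_zero)
qed (simp add: tensor_op_def id_op_def)

lemma Re_trace_eq_sum_pattern_weight:
  "Re (\<Sum>xs\<in>basis D m. rho xs xs) = (\<Sum>S\<in>Pow {..<m}. pattern_weight D psi m rho S)"
proof -
  have "(\<Sum>xs\<in>basis D m. rho xs xs) = trace_prod D m (tensor_op m (\<lambda>_. id_op)) rho"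
    unfolding trace_prod_def
    by (intro sum.cong refl) (simp add: tensor_op_id_op if_distrib[where f = "\<lambda>z. z * _"] cong: if_cong)
  also have "tensor_op m (\<lambda>_. id_op)
      = tensor_op m (\<lambda>i x y. of_real 1 * proj psi x y + of_real 1 * proj_perp psi x y)"
    by (simp add: proj_perp_def)
  finally show ?thesis
    by (simp only: Re_trace_prod_expand) simp
qed

text \<open>With \<open>j = N\<close> and \<open>c = 0\<close> (resp. \<open>c = 1\<close>) this is the operator defining \<open>f_rho\<close>
  (resp. \<open>p_rho\<close>); the symmetrisation averages over the position \<open>j\<close> of the marked site.\<close>
definition omega_except :: "(nat \<Rightarrow> complex) \<Rightarrow> real \<Rightarrow> real \<Rightarrow> nat \<Rightarrow> nat \<Rightarrow> site_op" where
  "omega_except psi lam c j i x y = proj psi x y + of_real (if i = j then c else lam) * proj_perp psi x y"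

definition f_coeff :: "real \<Rightarrow> nat \<Rightarrow> nat \<Rightarrow> real" where
  "f_coeff lam N k = real (Suc N - k) * lam ^ k"

definition p_coeff :: "real \<Rightarrow> nat \<Rightarrow> nat \<Rightarrow> real" where
  "p_coeff lam N k = real k * lam ^ (k - 1) + real (Suc N - k) * lam ^ k"

lemma prod_if_eq_const:
  fixes c d :: "'a::comm_monoid_mult"
  assumes "finite S"
  shows "(\<Prod>i\<in>S. if i = j then c else d) = (if j \<in> S then c * d ^ (card S - 1) else d ^ card S)"
proof (cases "j \<in> S")
  case True
  then have "(\<Prod>i\<in>S. if i = j then c else d) = c * (\<Prod>i\<in>S - {j}. if i = j then c else d)"
    using assms by (simp add: prod.remove)
  also have "(\<Prod>i\<in>S - {j}. if i = j then c else d) = (\<Prod>i\<in>S - {j}. d)"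
    by (intro prod.cong) auto
  finally have "(\<Prod>i\<in>S. if i = j then c else d) = c * (\<Prod>i\<in>S - {j}. d)" .
  then show ?thesis
    using True assms by (simp add: card_Diff_singleton)
next
  case False
  then have "(\<Prod>i\<in>S. if i = j then c else d) = (\<Prod>i\<in>S. d)"
    by (intro prod.cong) auto
  then show ?thesis
    using False by simp
qed

lemma sum_if_mem_lessThan:
  fixes A B :: "'a::comm_semiring_1"
  assumes "S \<subseteq> {..<m}"
  shows "(\<Sum>j<m. if j \<in> S then A else B) = of_nat (card S) * A + of_nat (m - card S) * B"
proof -
  have "finite S"
    using assms finite_subset by blast
  moreover have "{..<m} \<inter> S = S" "{..<m} \<inter> - S = {..<m} - S"
    using assms by auto
  ultimately show ?thesis
    using assms by (simp add: sum.If_cases card_Diff_subset)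
qed

lemma sum_prod_if_eq_const:
  fixes c d :: real
  assumes "S \<subseteq> {..<m}"
  shows "(\<Sum>j<m. \<Prod>i\<in>S. if i = j then c else d)
    = real (card S) * (c * d ^ (card S - 1)) + real (m - card S) * d ^ card S"
proof -
  have "finite S"
    using assms finite_subset by blast
  then have "(\<Sum>j<m. \<Prod>i\<in>S. if i = j then c else d) = (\<Sum>j<m. if j \<in> S then c * d ^ (card S - 1) else d ^ card S)"
    by (simp add: prod_if_eq_const)
  also have "\<dots> = real (card S) * (c * d ^ (card S - 1)) + real (m - card S) * d ^ card S"
    using assms by (rule sum_if_mem_lessThan)
  finally show ?thesis .
qed

lemma Re_trace_omega_except_symmetrised:
  assumes rho: "perm_inv D (Suc N) rho"
  shows "real (Suc N) * Re (trace_prod D (Suc N) (tensor_op (Suc N) (omega_except psi lam c N)) rho)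
    = (\<Sum>S\<in>Pow {..<Suc N}. (real (card S) * (c * lam ^ (card S - 1)) + real (Suc N - card S) * lam ^ card S)
          * pattern_weight D psi (Suc N) rho S)"
proof -
  let ?m = "Suc N"
  let ?w = "pattern_weight D psi ?m rho"
  have moved: "trace_prod D ?m (tensor_op ?m (omega_except psi lam c N)) rho
      = trace_prod D ?m (tensor_op ?m (omega_except psi lam c j)) rho" if "j < ?m" for j
  proof -
    have "Transposition.transpose j N permutes {..<?m}"
      using that by (intro permutes_swap_id) auto
    moreover have "(\<lambda>i. omega_except psi lam c N (Transposition.transpose j N i)) = omega_except psi lam c j"
      by (intro ext) (auto simp: omega_except_def Transposition.transpose_def)
    ultimately show ?thesis
      using trace_prod_tensor_op_permute[OF rho] by metis
  qed
  have expand: "Re (trace_prod D ?m (tensor_op ?m (omega_except psi lam c j)) rho)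
      = (\<Sum>S\<in>Pow {..<?m}. (\<Prod>i\<in>S. if i = j then c else lam) * ?w S)" for j
  proof -
    have "omega_except psi lam c j
        = (\<lambda>i x y. of_real 1 * proj psi x y + of_real (if i = j then c else lam) * proj_perp psi x y)"
      by (simp add: omega_except_def fun_eq_iff)
    then show ?thesis
      by (simp only: Re_trace_prod_expand) simp
  qed
  have "real ?m * Re (trace_prod D ?m (tensor_op ?m (omega_except psi lam c N)) rho)
      = (\<Sum>j<?m. Re (trace_prod D ?m (tensor_op ?m (omega_except psi lam c N)) rho))"
    by simp
  also have "\<dots> = (\<Sum>j<?m. Re (trace_prod D ?m (tensor_op ?m (omega_except psi lam c j)) rho))"
    by (intro sum.cong refl) (simp add: moved)
  also have "\<dots> = (\<Sum>S\<in>Pow {..<?m}. (\<Sum>j<?m. \<Prod>i\<in>S. if i = j then c else lam) * ?w S)"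
    unfolding expand sum_distrib_right by (rule sum.swap)
  also have "\<dots> = (\<Sum>S\<in>Pow {..<?m}. (real (card S) * (c * lam ^ (card S - 1))
      + real (?m - card S) * lam ^ card S) * ?w S)"
    by (intro sum.cong refl) (simp only: Pow_iff sum_prod_if_eq_const)
  finally show ?thesis .
qed

lemma f_rho_expansion:
  assumes "perm_inv D (Suc N) rho"
  shows "real (Suc N) * f_rho D psi lam N rho
    = (\<Sum>S\<in>Pow {..<Suc N}. f_coeff lam N (card S) * pattern_weight D psi (Suc N) rho S)"
proof -
  have "tensor_pow_with (Omega psi lam) N (proj psi) = tensor_op (Suc N) (omega_except psi lam 0 N)"
    by (auto simp: tensor_pow_with_def tensor_op_def omega_except_def Omega_def proj_perp_def id_op_def
        fun_eq_iff intro!: prod.cong)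
  then show ?thesis
    using Re_trace_omega_except_symmetrised[OF assms, of psi lam 0]
    by (simp add: f_rho_def f_coeff_def)
qed

lemma p_rho_expansion:
  assumes "perm_inv D (Suc N) rho"
  shows "real (Suc N) * p_rho D psi lam N rho
    = (\<Sum>S\<in>Pow {..<Suc N}. p_coeff lam N (card S) * pattern_weight D psi (Suc N) rho S)"
proof -
  have "tensor_pow_with (Omega psi lam) N id_op = tensor_op (Suc N) (omega_except psi lam 1 N)"
    by (auto simp: tensor_pow_with_def tensor_op_def omega_except_def Omega_def proj_perp_def id_op_def
        fun_eq_iff intro!: prod.cong)
  then show ?thesis
    using Re_trace_omega_except_symmetrised[OF assms, of psi lam 1]
    by (simp add: p_rho_def p_coeff_def)
qed

section \<open>Symmetric mixtures of pattern projectors\<close>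

lemma site_trace_diff_left: "site_trace D (\<lambda>x y. A x y - B x y) C = site_trace D A C - site_trace D B C"
  unfolding site_trace_def by (simp add: algebra_simps sum_subtractf)

lemma site_trace_diff_right: "site_trace D A (\<lambda>x y. B x y - C x y) = site_trace D A B - site_trace D A C"
  unfolding site_trace_def by (simp add: algebra_simps sum_subtractf)

lemma site_trace_commute: "site_trace D A B = site_trace D B A"
  unfolding site_trace_def by (subst sum.swap) (simp add: mult.commute)

context
  fixes D :: nat and psi :: "nat \<Rightarrow> complex"
  assumes unit: "unit_vec D psi"
begin

lemma site_trace_proj_proj: "site_trace D (proj psi) (proj psi) = 1"
proof -
  have "site_trace D (proj psi) (proj psi) = (\<Sum>x<D. psi x * cnj (psi x)) * (\<Sum>y<D. psi y * cnj (psi y))"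
    unfolding site_trace_def proj_def sum_product by (intro sum.cong refl) (simp add: mult_ac)
  then show ?thesis
    using unit_vec_sum_mult_cnj[OF unit] by simp
qed

lemma site_trace_id_op_proj: "site_trace D id_op (proj psi) = 1"
  using unit_vec_sum_mult_cnj[OF unit] by (simp add: site_trace_def proj_def sum_id_op_left)

lemma site_trace_proj_id_op: "site_trace D (proj psi) id_op = 1"
  using site_trace_id_op_proj by (simp add: site_trace_commute)

lemma site_trace_id_op_id_op: "site_trace D id_op id_op = of_nat D"
proof -
  have "site_trace D id_op id_op = (\<Sum>x<D. 1)"
    unfolding site_trace_def by (intro sum.cong refl) (simp add: sum_id_op_left, simp add: id_op_def)
  then show ?thesis
    by simp
qed

lemma site_trace_proj_proj_perp: "site_trace D (proj psi) (proj_perp psi) = 0"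
  unfolding proj_perp_def[abs_def] site_trace_diff_right site_trace_proj_proj site_trace_proj_id_op by simp

lemma site_trace_proj_perp_proj: "site_trace D (proj_perp psi) (proj psi) = 0"
  unfolding proj_perp_def[abs_def] site_trace_diff_left site_trace_proj_proj site_trace_id_op_proj by simp

lemma site_trace_proj_perp_proj_perp: "site_trace D (proj_perp psi) (proj_perp psi) = of_nat D - 1"
  unfolding proj_perp_def[abs_def] site_trace_diff_left site_trace_diff_right site_trace_proj_proj
    site_trace_id_op_proj site_trace_proj_id_op site_trace_id_op_id_op
  by simp

lemma trace_prod_pattern_pattern:
  assumes S: "S \<subseteq> {..<m}" and S': "S' \<subseteq> {..<m}"
  shows "trace_prod D m (tensor_op m (pattern psi S)) (tensor_op m (pattern psi S'))
    = (if S = S' then (of_nat D - 1) ^ card S else 0)"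
proof (cases "S = S'")
  case True
  have "trace_prod D m (tensor_op m (pattern psi S)) (tensor_op m (pattern psi S'))
      = (\<Prod>i<m. if i \<in> S then of_nat D - 1 else 1)"
    unfolding trace_prod_tensor_op True
    by (intro prod.cong refl) (simp add: pattern_def site_trace_proj_perp_proj_perp site_trace_proj_proj)
  also have "\<dots> = (of_nat D - 1) ^ card S"
    using S by (simp add: prod.If_cases Int_absorb1)
  finally show ?thesis
    using True by simp
next
  case False
  then obtain i where i: "i \<in> S \<and> i \<notin> S' \<or> i \<in> S' \<and> i \<notin> S"
    by blast
  then have "i < m"
    using S S' by auto
  moreover have "site_trace D (pattern psi S i) (pattern psi S' i) = 0"
    using i by (auto simp: pattern_def site_trace_proj_proj_perp site_trace_proj_perp_proj)
  ultimately show ?thesis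
    using False unfolding trace_prod_tensor_op by (auto intro: prod_zero)
qed

end

definition pattern_mixture :: "(nat \<Rightarrow> complex) \<Rightarrow> nat \<Rightarrow> (nat \<Rightarrow> real) \<Rightarrow> op" where
  "pattern_mixture psi m g xs ys = (\<Sum>S\<in>Pow {..<m}. of_real (g (card S)) * tensor_op m (pattern psi S) xs ys)"

lemma pattern_weight_pattern_mixture:
  assumes "D \<ge> 1" "unit_vec D psi" "S \<subseteq> {..<m}"
  shows "pattern_weight D psi m (pattern_mixture psi m g) S = g (card S) * (real D - 1) ^ card S"
proof -
  have "trace_prod D m (tensor_op m (pattern psi S)) (pattern_mixture psi m g)
      = (\<Sum>S'\<in>Pow {..<m}. if S = S' then of_real (g (card S)) * (of_nat D - 1) ^ card S else 0)"
    unfolding pattern_mixture_def[abs_def] trace_prod_sum_right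
    using assms(3) by (intro sum.cong refl) (simp add: trace_prod_pattern_pattern[OF assms(2)])
  also have "\<dots> = of_real (g (card S) * (real D - 1) ^ card S)"
    using assms(1,3) by (simp add: of_nat_diff)
  finally show ?thesis
    unfolding pattern_weight_def by simp
qed

lemma psd_op_pattern_mixture:
  assumes "D \<ge> 1" "unit_vec D psi" "\<And>k. g k \<ge> 0"
  shows "psd_op D m (pattern_mixture psi m g)"
  unfolding pattern_mixture_def[abs_def]
  using assms by (intro psd_op_sum psd_op_pattern)

lemma perm_inv_pattern_mixture: "perm_inv D m (pattern_mixture psi m g)"
  unfolding perm_inv_def
proof (intro allI impI ballI)
  fix p xs ys assume p: "p permutes {..<m}" and xs: "xs \<in> basis D m" and ys: "ys \<in> basis D m"
  have image_Pow: "bij_betw ((`) p) (Pow {..<m}) (Pow {..<m})"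
    using p by (simp add: bij_betw_Pow permutes_imp_bij)
  have pattern_inv: "(\<lambda>j. pattern psi S (inv p j)) = pattern psi (p ` S)" for S
    using permutes_inverses[OF p] by (force simp: pattern_def fun_eq_iff image_iff)
  have "pattern_mixture psi m g (perm_list p xs) (perm_list p ys)
      = (\<Sum>S\<in>Pow {..<m}. of_real (g (card (p ` S))) * tensor_op m (pattern psi (p ` S)) xs ys)"
    unfolding pattern_mixture_def
    using length_basis[OF xs] length_basis[OF ys] permutes_inj[OF p]
    by (simp add: tensor_op_perm_list[OF p] pattern_inv card_image inj_on_subset[of p UNIV])
  also have "\<dots> = pattern_mixture psi m g xs ys"
    unfolding pattern_mixture_def
    by (rule sum.reindex_bij_betw[OF image_Pow, where g = "\<lambda>S. of_real (g (card S)) * tensor_op m (pattern psi S) xs ys"])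
  finally show "pattern_mixture psi m g (perm_list p xs) (perm_list p ys) = pattern_mixture psi m g xs ys" .
qed

lemma sum_Pow_card:
  fixes \<phi> :: "nat \<Rightarrow> 'a::comm_semiring_1"
  assumes "finite A"
  shows "(\<Sum>S\<in>Pow A. \<phi> (card S)) = (\<Sum>k\<le>card A. of_nat (card A choose k) * \<phi> k)"
proof -
  have "(\<Sum>S\<in>Pow A. \<phi> (card S)) = (\<Sum>k\<le>card A. \<Sum>S\<in>{S. S \<in> Pow A \<and> card S = k}. \<phi> (card S))"
    using assms by (intro sum.group[symmetric]) (auto simp: card_mono)
  also have "\<dots> = (\<Sum>k\<le>card A. of_nat (card {S. S \<subseteq> A \<and> card S = k}) * \<phi> k)"
    by simp
  finally show ?thesis
    using assms by (simp add: n_subsets)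
qed

text \<open>The witness gives each projector \<open>tensor_op m (pattern psi S)\<close> the weight \<open>w k / c k\<close>, where
  \<open>c k = (m choose k) * (D - 1) ^ k\<close> is the total trace of the projectors of level \<open>k = card S\<close>;
  \<open>D \<ge> 2\<close> makes every \<open>c k\<close> positive.\<close>
lemma level_state_exists:
  assumes D: "D \<ge> 2" and unit: "unit_vec D psi"
    and w: "\<And>k. w k \<ge> 0" "(\<Sum>k\<le>Suc N. w k) = 1"
  obtains rho where "density_op D (Suc N) rho" "perm_inv D (Suc N) rho"
    "real (Suc N) * f_rho D psi lam N rho = (\<Sum>k\<le>Suc N. w k * f_coeff lam N k)"
    "real (Suc N) * p_rho D psi lam N rho = (\<Sum>k\<le>Suc N. w k * p_coeff lam N k)"
proof -
  define m where "m = Suc N"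
  define c where "c k = real (m choose k) * (real D - 1) ^ k" for k
  have c_pos: "c k > 0" if "k \<le> m" for k
    using D that by (simp add: c_def)
  have c_nonneg: "c k \<ge> 0" for k
    using D by (simp add: c_def)
  define rho where "rho = pattern_mixture psi m (\<lambda>k. w k / c k)"
  have weights: "(\<Sum>S\<in>Pow {..<m}. h (card S) * pattern_weight D psi m rho S) = (\<Sum>k\<le>m. w k * h k)" for h
  proof -
    have "(\<Sum>S\<in>Pow {..<m}. h (card S) * pattern_weight D psi m rho S)
        = (\<Sum>S\<in>Pow {..<m}. h (card S) * (w (card S) / c (card S) * (real D - 1) ^ card S))"
      using D unit by (intro sum.cong refl) (simp add: rho_def pattern_weight_pattern_mixture)
    also have "\<dots> = (\<Sum>k\<le>m. real (m choose k) * (h k * (w k / c k * (real D - 1) ^ k)))"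
      using sum_Pow_card[of "{..<m}" "\<lambda>k. h k * (w k / c k * (real D - 1) ^ k)"] by simp
    also have "\<dots> = (\<Sum>k\<le>m. c k * (w k / c k) * h k)"
      by (intro sum.cong refl) (simp add: c_def mult_ac)
    also have "\<dots> = (\<Sum>k\<le>m. w k * h k)"
      using c_pos by (intro sum.cong refl) (simp add: less_imp_neq[symmetric])
    finally show ?thesis .
  qed
  have "psd_op D m rho"
    unfolding rho_def using D unit w(1) c_nonneg by (intro psd_op_pattern_mixture) simp_all
  moreover have "Re (\<Sum>xs\<in>basis D m. rho xs xs) = 1"
    unfolding Re_trace_eq_sum_pattern_weight[where psi = psi] using weights[of "\<lambda>_. 1"] w(2) by (simp add: m_def)
  ultimately have "density_op D (Suc N) rho"
    unfolding m_def by (rule density_op_of_psd_op)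
  moreover have perm: "perm_inv D (Suc N) rho"
    unfolding rho_def m_def by (rule perm_inv_pattern_mixture)
  moreover have "real (Suc N) * f_rho D psi lam N rho = (\<Sum>k\<le>Suc N. w k * f_coeff lam N k)"
    using f_rho_expansion[OF perm] weights[of "f_coeff lam N"] by (simp only: m_def)
  moreover have "real (Suc N) * p_rho D psi lam N rho = (\<Sum>k\<le>Suc N. w k * p_coeff lam N k)"
    using p_rho_expansion[OF perm] weights[of "p_coeff lam N"] by (simp only: m_def)
  ultimately show ?thesis
    by (rule that)
qed

lemma f_rho_nonneg:
  assumes "D \<ge> 1" "unit_vec D psi" "lam \<ge> 0" "density_op D (Suc N) rho" "perm_inv D (Suc N) rho"
  shows "f_rho D psi lam N rho \<ge> 0"
proof -
  have "psd_op D (Suc N) rho"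
    using assms(4) by (simp add: density_op_iff_psd_op)
  then have "real (Suc N) * f_rho D psi lam N rho \<ge> 0"
    unfolding f_rho_expansion[OF assms(5)] using assms(1-3)
    by (intro sum_nonneg mult_nonneg_nonneg pattern_weight_nonneg) (simp_all add: f_coeff_def)
  then show ?thesis
    by (simp add: zero_le_mult_iff)
qed

lemma sum_two_levels:
  fixes a b :: real
  assumes "k < n"
  shows "(\<Sum>j\<le>n. (if j = k then a else if j = Suc k then b else 0) * h j) = a * h k + b * h (Suc k)"
proof -
  have "(\<Sum>j\<le>n. (if j = k then a else if j = Suc k then b else 0) * h j)
      = (\<Sum>j\<le>n. (if j = k then a * h k else 0) + (if j = Suc k then b * h (Suc k) else 0))"
    by (intro sum.cong) auto
  then show ?thesis
    using assms by (simp add: sum.distrib)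
qed

lemma two_level_state_exists:
  assumes "D \<ge> 2" "unit_vec D psi" "k \<le> N" "0 \<le> t" "t \<le> 1"
  obtains rho where "density_op D (Suc N) rho" "perm_inv D (Suc N) rho"
    "real (Suc N) * f_rho D psi lam N rho = (1 - t) * f_coeff lam N k + t * f_coeff lam N (Suc k)"
    "real (Suc N) * p_rho D psi lam N rho = (1 - t) * p_coeff lam N k + t * p_coeff lam N (Suc k)"
proof -
  let ?w = "\<lambda>j. if j = k then 1 - t else if j = Suc k then t else 0"
  have k: "k < Suc N"
    using assms(3) by simp
  have two_levels: "(\<Sum>j\<le>Suc N. ?w j * h j) = (1 - t) * h k + t * h (Suc k)" for h :: "nat \<Rightarrow> real"
    using k by (rule sum_two_levels)
  have total: "(\<Sum>j\<le>Suc N. ?w j) = 1"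
    using two_levels[of "\<lambda>_. 1"] by simp
  have nonneg: "?w j \<ge> 0" for j
    using assms(4,5) by simp
  obtain rho where "density_op D (Suc N) rho" "perm_inv D (Suc N) rho"
    "real (Suc N) * f_rho D psi lam N rho = (\<Sum>j\<le>Suc N. ?w j * f_coeff lam N j)"
    "real (Suc N) * p_rho D psi lam N rho = (\<Sum>j\<le>Suc N. ?w j * p_coeff lam N j)"
    by (rule level_state_exists[OF assms(1,2) nonneg total, where lam = lam])
  then show ?thesis
    unfolding two_levels by (rule that)
qed

lemma power_Suc_ge_linear:
  fixes lam :: real
  assumes "0 < lam" "lam \<le> 1"
  shows "lam - (1 - lam) * real j \<le> lam ^ Suc j"
proof -
  have "1 - real j * (1 - lam) \<le> lam ^ j"
    using Bernoulli_inequality[of "lam - 1" j] assms by (simp add: algebra_simps)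
  then have "lam * (1 - real j * (1 - lam)) \<le> lam ^ Suc j"
    using assms by (simp add: mult_left_mono)
  moreover have "lam * (real j * (1 - lam)) \<le> real j * (1 - lam)"
    using assms by (simp add: mult_left_le_one_le)
  ultimately show ?thesis
    by (simp add: algebra_simps)
qed

lemma power_mult_linear_le_one:
  fixes lam :: real
  assumes "0 < lam" "lam \<le> 1"
  shows "lam ^ j * (1 + (1 - lam) * real j) \<le> 1"
proof -
  have "1 - lam \<le> (1 - lam) / lam"
    using assms by (simp add: le_divide_eq mult_left_le)
  then have "1 + (1 - lam) * real j \<le> 1 + real j * ((1 - lam) / lam)"
    using mult_left_mono[of "1 - lam" "(1 - lam) / lam" "real j"] by (simp add: mult.commute)
  also have "\<dots> \<le> (1 + (1 - lam) / lam) ^ j"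
    using assms by (intro Bernoulli_inequality order_trans[OF _ divide_nonneg_pos]) auto
  also have "1 + (1 - lam) / lam = 1 / lam"
    using assms by (simp add: field_simps)
  finally have "lam ^ j * (1 + (1 - lam) * real j) \<le> lam ^ j * (1 / lam) ^ j"
    using assms by (simp add: mult_left_mono)
  then show ?thesis
    using assms by (simp add: power_one_over)
qed

text \<open>For every integer \<open>j\<close>, \<open>lam ^ j \<ge> 1 - (1 - lam) * j\<close>: by convexity \<open>lam ^ j\<close> lies above
  its secant through \<open>j = 0\<close> and \<open>j = 1\<close>. Here \<open>j = k\<^sub>0 + 1 - k\<close>, multiplied out by
  \<open>lam ^ k\<close>.\<close>
lemma power_secant_le:
  fixes lam :: real
  assumes lam: "0 < lam" "lam < 1"
  shows "lam ^ k * (lam + (1 - lam) * (real k - real k0)) \<le> lam ^ Suc k0"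
proof (cases "k \<le> k0")
  case True
  then obtain j where j: "k0 = k + j"
    using le_Suc_ex by blast
  have "lam ^ k * (lam - (1 - lam) * real j) \<le> lam ^ k * lam ^ Suc j"
    using power_Suc_ge_linear[of lam j] lam by (intro mult_left_mono) auto
  then show ?thesis
    by (simp add: j power_add mult_ac)
next
  case False
  then obtain j where j: "k = Suc k0 + j"
    by (metis add_Suc le_Suc_ex not_less_eq_eq)
  have "lam ^ Suc k0 * (lam ^ j * (1 + (1 - lam) * real j)) \<le> lam ^ Suc k0 * 1"
    using power_mult_linear_le_one[of lam j] lam by (intro mult_left_mono) auto
  then show ?thesis
    by (simp add: j power_add algebra_simps)
qed

lemma mult_one_minus_powr_le:
  fixes lam s :: real
  assumes lam: "0 < lam" "lam < 1" and s: "0 \<le> s" "s \<le> 1"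
  shows "lam * (1 - lam powr s) \<le> (1 - lam) * s * lam powr s"
proof -
  define A where "A = lam powr s"
  have A: "A > 0"
    unfolding A_def using lam by simp
  have "(1 / lam) powr s * 1 powr (1 - s) \<le> s * (1 / lam) + (1 - s) * 1"
    using lam s by (intro Youngs_inequality_0) auto
  then have "1 / A \<le> s / lam + (1 - s)"
    unfolding A_def using lam by (simp add: powr_divide)
  then have "lam * A * (1 / A) \<le> lam * A * (s / lam + (1 - s))"
    using A lam by (intro mult_left_mono) auto
  moreover have "lam * A * (1 / A) = lam"
    using A by simp
  moreover have "lam * A * (s / lam + (1 - s)) = s * A + lam * A * (1 - s)"
    using lam by (simp add: field_simps)
  ultimately show ?thesis
    unfolding A_def[symmetric] by (simp add: algebra_simps)
qed

lemma log_bound_endpoint_ineq: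
  fixes lam eps s :: real
  assumes lam: "0 < lam" "lam < 1" and s: "0 \<le> s" "s \<le> 1"
    and N: "real q + s - eps * (1 - lam) * real q \<le> lam * eps * real N"
  shows "(1 - eps) * (lam * (1 - lam powr s) + lam powr s * (1 - lam) * real q)
    \<le> lam * eps * (lam powr s * lam + lam powr s * (1 - lam) * (real (Suc N) - real q) - 1)"
proof -
  let ?a = "lam powr s"
  have "?a * (1 - lam) * (s + lam * eps)
      \<le> ?a * (1 - lam) * (lam * eps * real (Suc N) - real q * (1 - eps * (1 - lam)))"
    using N lam by (intro mult_left_mono) (auto simp: algebra_simps)
  moreover have "lam * (1 - ?a) \<le> (1 - lam) * s * ?a"
    using lam s by (rule mult_one_minus_powr_le)
  ultimately show ?thesis
    by (simp add: algebra_simps)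
qed

lemma le_power_of_le_log:
  fixes lam delta :: real
  assumes "0 < lam" "lam < 1" "0 < delta" "real k \<le> log lam delta"
  shows "delta \<le> lam ^ k"
  using powr_mono'[OF assms(4), of lam] assms by (simp add: powr_realpow)

lemma power_le_of_log_le:
  fixes lam delta :: real
  assumes "0 < lam" "lam < 1" "0 < delta" "log lam delta \<le> real k"
  shows "lam ^ k \<le> delta"
  using powr_mono'[OF assms(4), of lam] assms by (simp add: powr_realpow)

section \<open>Lagrangian certificates\<close>

text \<open>The Lagrangian, at level \<open>k\<close>, of the linear programme \<open>minimise f - F p subject to p \<ge> delta\<close>
  over distributions of the level \<open>card S\<close>; all coefficients are scaled by \<open>N + 1\<close>.\<close>
definition lagrangian :: "real \<Rightarrow> nat \<Rightarrow> real \<Rightarrow> real \<Rightarrow> real \<Rightarrow> nat \<Rightarrow> real" where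
  "lagrangian lam N F mu delta k = f_coeff lam N k - (F + mu) * p_coeff lam N k + mu * delta * real (Suc N)"

lemma f_rho_ge_of_lagrangian_nonneg:
  assumes D: "D \<ge> 1" and unit: "unit_vec D psi" and mu: "mu \<ge> 0"
    and L: "\<And>k. k \<le> Suc N \<Longrightarrow> lagrangian lam N F mu delta k \<ge> 0"
    and rho: "density_op D (Suc N) rho" "perm_inv D (Suc N) rho"
    and p: "p_rho D psi lam N rho \<ge> delta"
  shows "f_rho D psi lam N rho \<ge> F * p_rho D psi lam N rho"
proof -
  let ?w = "pattern_weight D psi (Suc N) rho"
  have psd: "psd_op D (Suc N) rho" and total: "(\<Sum>S\<in>Pow {..<Suc N}. ?w S) = 1"
    using rho(1) Re_trace_eq_sum_pattern_weight[where D = D and m = "Suc N" and rho = rho and psi = psi] by (simp_all add: density_op_iff_psd_op)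
  let ?L = "\<Sum>S\<in>Pow {..<Suc N}. lagrangian lam N F mu delta (card S) * ?w S"
  let ?f = "f_rho D psi lam N rho" and ?p = "p_rho D psi lam N rho" and ?n = "real (Suc N)"
  have "?L = ?n * ?f - (F + mu) * (?n * ?p) + mu * delta * ?n * (\<Sum>S\<in>Pow {..<Suc N}. ?w S)"
    unfolding lagrangian_def f_rho_expansion[OF rho(2)] p_rho_expansion[OF rho(2)]
    by (simp add: algebra_simps sum.distrib sum_subtractf sum_distrib_left)
  then have "?n * ?f - ?n * (F * ?p) = ?L + ?n * (mu * ?p - mu * delta)"
    using total by (simp add: algebra_simps)
  moreover have "?L \<ge> 0"
  proof (intro sum_nonneg mult_nonneg_nonneg)
    fix S assume "S \<in> Pow {..<Suc N}"
    then show "lagrangian lam N F mu delta (card S) \<ge> 0"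
      using card_mono[of "{..<Suc N}" S] by (intro L) auto
    show "?w S \<ge> 0"
      using D unit psd by (rule pattern_weight_nonneg)
  qed
  moreover have "mu * delta \<le> mu * ?p"
    using p mu by (rule mult_left_mono)
  then have "?n * (mu * ?p - mu * delta) \<ge> 0"
    by simp
  ultimately have "?n * (F * ?p) \<le> ?n * ?f"
    by linarith
  then show ?thesis
    by (simp del: of_nat_Suc)
qed

lemma Fid_ge_of_lagrangian_nonneg:
  assumes D: "D \<ge> 2" and unit: "unit_vec D psi" and delta: "0 < delta" "delta \<le> 1" and mu: "mu \<ge> 0"
    and L: "\<And>k. k \<le> Suc N \<Longrightarrow> lagrangian lam N F mu delta k \<ge> 0"
  shows "Fid D psi N delta lam \<ge> F"
proof -
  let ?X = "{f_rho D psi lam N rho / p_rho D psi lam N rho | rho.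
      density_op D (N+1) rho \<and> perm_inv D (N+1) rho \<and> p_rho D psi lam N rho \<ge> delta}"
  obtain rho where "density_op D (Suc N) rho" "perm_inv D (Suc N) rho"
     "real (Suc N) * p_rho D psi lam N rho = (1 - 0) * p_coeff lam N 0 + 0 * p_coeff lam N (Suc 0)"
    using two_level_state_exists[OF D unit, of 0 N 0] by auto
  then have "?X \<noteq> {}"
    using delta by (auto simp: p_coeff_def)
  moreover have "F \<le> x" if "x \<in> ?X" for x
  proof -
    obtain rho where rho: "density_op D (Suc N) rho" "perm_inv D (Suc N) rho" "p_rho D psi lam N rho \<ge> delta"
      and x: "x = f_rho D psi lam N rho / p_rho D psi lam N rho"
      using \<open>x \<in> ?X\<close> by auto
    have "f_rho D psi lam N rho \<ge> F * p_rho D psi lam N rho"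
      using D unit mu L rho by (intro f_rho_ge_of_lagrangian_nonneg) auto
    moreover have "p_rho D psi lam N rho > 0"
      using rho delta by linarith
    ultimately show ?thesis
      unfolding x by (simp add: le_divide_eq)
  qed
  ultimately show ?thesis
    unfolding Fid_def by (intro cInf_greatest) auto
qed

lemma Fid_le_ratio:
  assumes D: "D \<ge> 1" and unit: "unit_vec D psi" and lam: "lam \<ge> 0" and delta: "0 < delta"
    and rho: "density_op D (Suc N) rho" "perm_inv D (Suc N) rho" "p_rho D psi lam N rho \<ge> delta"
  shows "Fid D psi N delta lam \<le> f_rho D psi lam N rho / p_rho D psi lam N rho"
  unfolding Fid_def
proof (rule cInf_lower)
  show "f_rho D psi lam N rho / p_rho D psi lam N rho \<in> {f_rho D psi lam N rho / p_rho D psi lam N rho | rho.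
      density_op D (N+1) rho \<and> perm_inv D (N+1) rho \<and> p_rho D psi lam N rho \<ge> delta}"
    using rho by auto
  show "bdd_below {f_rho D psi lam N rho / p_rho D psi lam N rho | rho.
      density_op D (N+1) rho \<and> perm_inv D (N+1) rho \<and> p_rho D psi lam N rho \<ge> delta}"
  proof (rule bdd_belowI)
    fix x assume "x \<in> {f_rho D psi lam N rho / p_rho D psi lam N rho | rho.
      density_op D (N+1) rho \<and> perm_inv D (N+1) rho \<and> p_rho D psi lam N rho \<ge> delta}"
    then obtain rho where rho: "density_op D (Suc N) rho" "perm_inv D (Suc N) rho" "p_rho D psi lam N rho \<ge> delta"
      and x: "x = f_rho D psi lam N rho / p_rho D psi lam N rho"
      by auto
    have "f_rho D psi lam N rho \<ge> 0"
      using D unit lam rho by (intro f_rho_nonneg) auto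
    then show "0 \<le> x"
      unfolding x using rho(3) delta by simp
  qed
qed

lemma Fid_lt_of_two_level_violation:
  assumes D: "D \<ge> 2" and unit: "unit_vec D psi" and lam: "lam \<ge> 0" and delta: "0 < delta"
    and k: "k \<le> N" and t: "0 \<le> t" "t \<le> 1"
    and p: "(1 - t) * p_coeff lam N k + t * p_coeff lam N (Suc k) \<ge> delta * real (Suc N)"
    and f: "(1 - t) * f_coeff lam N k + t * f_coeff lam N (Suc k)
      < F * ((1 - t) * p_coeff lam N k + t * p_coeff lam N (Suc k))"
  shows "Fid D psi N delta lam < F"
proof -
  obtain rho where rho: "density_op D (Suc N) rho" "perm_inv D (Suc N) rho"
     and f_rho: "real (Suc N) * f_rho D psi lam N rho = (1 - t) * f_coeff lam N k + t * f_coeff lam N (Suc k)"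
     and p_rho: "real (Suc N) * p_rho D psi lam N rho = (1 - t) * p_coeff lam N k + t * p_coeff lam N (Suc k)"
    using two_level_state_exists[OF D unit k t] .
  have "real (Suc N) * delta \<le> real (Suc N) * p_rho D psi lam N rho"
    using p unfolding p_rho[symmetric] by (simp only: mult.commute)
  then have p_ge: "p_rho D psi lam N rho \<ge> delta"
    by (simp only: mult_le_cancel_left_pos of_nat_0_less_iff zero_less_Suc)
  have "real (Suc N) * f_rho D psi lam N rho < real (Suc N) * (F * p_rho D psi lam N rho)"
    using f unfolding f_rho[symmetric] p_rho[symmetric] by (simp only: mult.left_commute)
  then have "f_rho D psi lam N rho < F * p_rho D psi lam N rho"
    by (simp only: mult_less_cancel_left_pos of_nat_0_less_iff zero_less_Suc)
  then have "f_rho D psi lam N rho / p_rho D psi lam N rho < F"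
    using p_ge delta by (simp add: divide_less_eq)
  moreover have "Fid D psi N delta lam \<le> f_rho D psi lam N rho / p_rho D psi lam N rho"
    using D unit lam delta rho p_ge by (intro Fid_le_ratio) auto
  ultimately show ?thesis
    by linarith
qed

text \<open>Multiplying by \<open>lam / lam ^ k\<close> and bounding \<open>delta \<ge> a * lam ^ q\<close> through the secant of
  \<open>lam ^ k\<close>, the Lagrangian dominates an affine function of \<open>k\<close>; the two hypotheses say that this
  function is nonnegative at \<open>k = 0\<close> and at \<open>k = N + 1\<close>.\<close>
lemma lagrangian_nonneg_of_endpoints:
  fixes lam eps delta a mu :: real
  assumes lam: "0 < lam" "lam < 1" and a: "0 \<le> a" "a * lam ^ q \<le> delta" and mu: "mu \<ge> 0"
    and start: "mu * (lam * (1 - a) + a * (1 - lam) * real q) \<le> lam * eps"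
    and stop: "1 - eps \<le> mu * (a * lam + a * (1 - lam) * (real (Suc N) - real q) - 1)"
    and k: "k \<le> Suc N"
  shows "lagrangian lam N (1 - eps) mu delta k \<ge> 0"
proof -
  define m where "m = real (Suc N)"
  define affine where "affine = (m - real k) * lam * (eps - mu) - ((1 - eps) + mu) * real k
      + mu * m * a * (lam + (1 - lam) * (real k - real q))"
  have affine_eq: "affine = (m - real k) * (lam * eps - mu * (lam * (1 - a) + a * (1 - lam) * real q))
      + real k * (mu * (a * lam + a * (1 - lam) * (m - real q) - 1) - (1 - eps))"
    unfolding affine_def by (simp add: algebra_simps)
  have "real k \<le> m"
    using k unfolding m_def by simp
  then have affine_nonneg: "affine \<ge> 0"
    unfolding affine_eq using start stop unfolding m_def by (intro add_nonneg_nonneg mult_nonneg_nonneg) auto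
  have "mu * m * a * (lam ^ k * (lam + (1 - lam) * (real k - real q))) \<le> mu * m * a * lam ^ Suc q"
    using power_secant_le[OF lam, of k q] mu a(1) unfolding m_def by (intro mult_left_mono) auto
  also have "\<dots> = (mu * m) * ((a * lam ^ q) * lam)"
    by (simp add: mult_ac)
  also have "\<dots> \<le> (mu * m) * (delta * lam)"
    using a(2) mu lam unfolding m_def by (intro mult_left_mono mult_right_mono) auto
  finally have secant: "mu * m * a * (lam ^ k * (lam + (1 - lam) * (real k - real q))) \<le> (mu * m) * (delta * lam)" .
  have diff: "real (Suc N - k) = m - real k"
    using k unfolding m_def by (simp add: of_nat_diff)
  have p_shift: "lam * p_coeff lam N k = real k * lam ^ k + lam * ((m - real k) * lam ^ k)"
    unfolding p_coeff_def diff by (cases k) (simp_all add: algebra_simps)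
  have "lam * lagrangian lam N (1 - eps) mu delta k
      = lam * f_coeff lam N k - (1 - eps + mu) * (lam * p_coeff lam N k) + mu * m * (delta * lam)"
    unfolding lagrangian_def m_def by (simp add: algebra_simps)
  also have "\<dots> = lam ^ k * ((m - real k) * lam * (eps - mu) - ((1 - eps) + mu) * real k)
      + mu * m * (delta * lam)"
    unfolding p_shift f_coeff_def diff by (simp add: algebra_simps)
  also have "\<dots> \<ge> lam ^ k * affine"
    using secant unfolding affine_def by (simp add: algebra_simps)
  finally have "lam * lagrangian lam N (1 - eps) mu delta k \<ge> lam ^ k * affine" .
  moreover have "lam ^ k * affine \<ge> 0"
    using affine_nonneg lam by simp
  ultimately have "lam * lagrangian lam N (1 - eps) mu delta k \<ge> 0"
    by linarith
  then show ?thesis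
    using lam by (simp add: zero_le_mult_iff)
qed

lemma two_level_mixture_coeffs:
  fixes lam :: real
  assumes lam: "0 < lam" and q: "1 \<le> q" "q < N"
    and s: "s = real q + lam * (real N - real q)" and t: "t = real q / s"
  shows "(1 - t) * p_coeff lam N q + t * p_coeff lam N (Suc q) = lam ^ q * real (Suc N)"
    and "s * ((1 - t) * f_coeff lam N q + t * f_coeff lam N (Suc q))
      = lam ^ q * real (Suc N) * (lam * (real N - real q))"
proof -
  obtain j where j: "q = Suc j"
    using q by (cases q) auto
  define n where "n = real N - real q"
  have s_n: "s = real q + lam * n"
    unfolding s n_def ..
  have "s > 0"
    unfolding s_n n_def using lam q by (simp add: add_pos_nonneg)
  then have st: "s * t = real q" "s * (1 - t) = lam * n"
    unfolding t by (simp_all add: s_n field_simps)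
  have diffs: "real (Suc N - q) = n + 1" "real (Suc N - Suc q) = n"
    unfolding n_def using q by (auto simp: of_nat_diff)
  define x where "x = lam ^ j"
  have q_pow: "lam ^ q = lam * x"
    unfolding x_def j by simp
  have coeffs: "p_coeff lam N q = real q * x + (n + 1) * lam * x"
    "p_coeff lam N (Suc q) = (real q + 1) * lam * x + n * lam * lam * x"
    "f_coeff lam N q = (n + 1) * lam * x" "f_coeff lam N (Suc q) = n * lam * lam * x"
    unfolding p_coeff_def f_coeff_def diffs by (simp_all add: x_def j)
  have N_eq: "real N = n + real q"
    unfolding n_def by simp
  have "s * ((1 - t) * p_coeff lam N q + t * p_coeff lam N (Suc q))
      = (s * (1 - t)) * p_coeff lam N q + (s * t) * p_coeff lam N (Suc q)"
    by (simp add: algebra_simps)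
  also have "\<dots> = s * (lam ^ q * real (Suc N))"
    unfolding st coeffs q_pow by (simp add: N_eq s_n algebra_simps)
  finally show "(1 - t) * p_coeff lam N q + t * p_coeff lam N (Suc q) = lam ^ q * real (Suc N)"
    using \<open>s > 0\<close> by simp
  have "s * ((1 - t) * f_coeff lam N q + t * f_coeff lam N (Suc q))
      = (s * (1 - t)) * f_coeff lam N q + (s * t) * f_coeff lam N (Suc q)"
    by (simp add: algebra_simps)
  also have "\<dots> = lam ^ q * real (Suc N) * (lam * n)"
    unfolding st coeffs q_pow by (simp add: N_eq algebra_simps)
  finally show "s * ((1 - t) * f_coeff lam N q + t * f_coeff lam N (Suc q))
      = lam ^ q * real (Suc N) * (lam * (real N - real q))"
    unfolding n_def .
qed

lemma two_level_violation_exists: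
  fixes lam eps delta :: real
  assumes lam: "0 < lam" "lam < 1" and q: "1 \<le> q" "q < N"
    and N: "eps * lam * (real N - real q) < (1 - eps) * real q" and delta: "delta \<le> lam ^ q"
  obtains t where "0 \<le> t" "t \<le> 1"
    "delta * real (Suc N) \<le> (1 - t) * p_coeff lam N q + t * p_coeff lam N (Suc q)"
    "(1 - t) * f_coeff lam N q + t * f_coeff lam N (Suc q)
      < (1 - eps) * ((1 - t) * p_coeff lam N q + t * p_coeff lam N (Suc q))"
proof -
  define s where "s = real q + lam * (real N - real q)"
  define t where "t = real q / s"
  note p = two_level_mixture_coeffs(1)[OF lam(1) q s_def t_def]
    and f = two_level_mixture_coeffs(2)[OF lam(1) q s_def t_def]
  have s: "s > 0"
    unfolding s_def using lam q by (simp add: add_pos_nonneg)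
  have "real q \<le> s"
    unfolding s_def using lam q by simp
  then have "0 \<le> t" "t \<le> 1"
    unfolding t_def using s by simp_all
  moreover have "lam * (real N - real q) < (1 - eps) * s"
    using N unfolding s_def by (simp add: algebra_simps)
  then have "lam ^ q * real (Suc N) * (lam * (real N - real q)) < lam ^ q * real (Suc N) * ((1 - eps) * s)"
    using lam by (intro mult_strict_left_mono) simp_all
  then have "s * ((1 - t) * f_coeff lam N q + t * f_coeff lam N (Suc q))
      < s * ((1 - eps) * ((1 - t) * p_coeff lam N q + t * p_coeff lam N (Suc q)))"
    unfolding f p by (simp add: mult_ac)
  then have "(1 - t) * f_coeff lam N q + t * f_coeff lam N (Suc q)
      < (1 - eps) * ((1 - t) * p_coeff lam N q + t * p_coeff lam N (Suc q))"
    using s by simp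
  moreover have "delta * real (Suc N) \<le> (1 - t) * p_coeff lam N q + t * p_coeff lam N (Suc q)"
    unfolding p using delta by (simp add: mult_right_mono)
  ultimately show ?thesis
    using that by blast
qed

section \<open>Bounds on \<open>N(eps, delta, lam)\<close>\<close>

lemma log_bound_eq_floor_bound:
  fixes lam eps L :: real
  assumes "0 < lam" "0 < eps" "L \<in> \<int>"
  shows "\<lceil>L / (lam * eps) - (1 - lam) * of_int \<lfloor>L\<rfloor> / lam\<rceil>
    = \<lfloor>L\<rfloor> + \<lceil>of_int \<lfloor>L\<rfloor> * (1 - eps) / (lam * eps)\<rceil>"
proof -
  obtain z where z: "L = of_int z"
    using assms(3) by (auto elim: Ints_cases)
  have "L / (lam * eps) - (1 - lam) * of_int \<lfloor>L\<rfloor> / lam = of_int z * (1 - eps) / (lam * eps) + of_int z"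
    unfolding z using assms(1,2) by (simp add: field_simps)
  then show ?thesis
    unfolding z by simp
qed

lemma Nmin_le:
  assumes "n \<ge> 1" "Fid D psi n delta lam \<ge> 1 - eps"
  shows "Nmin D psi eps delta lam \<le> n"
  unfolding Nmin_def using assms by (intro Least_le) simp

lemma Fid_Nmin_ge:
  assumes "n \<ge> 1" "Fid D psi n delta lam \<ge> 1 - eps"
  shows "Fid D psi (Nmin D psi eps delta lam) delta lam \<ge> 1 - eps"
  using LeastI[where P = "\<lambda>n. n \<ge> 1 \<and> Fid D psi n delta lam \<ge> 1 - eps"] assms
  unfolding Nmin_def by blast

context
  fixes D :: nat and psi :: "nat \<Rightarrow> complex" and eps delta lam :: real
  assumes D: "D \<ge> 2" and unit: "unit_vec D psi"
    and eps: "0 < eps" "eps < 1" and delta: "0 < delta" "delta < 1" and lam: "0 < lam" "lam < 1"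
begin

lemma log_pos: "log lam delta > 0"
  using lam delta by (simp add: log_def divide_neg_neg)

lemma Fid_ge_of_power_le:
  assumes K: "K \<ge> 1" "lam ^ K \<le> delta" and N: "real K + real K * (1 - eps) / (lam * eps) \<le> real N"
  shows "Fid D psi N delta lam \<ge> 1 - eps"
proof -
  define mu where "mu = lam * eps / ((1 - lam) * real K)"
  have mu: "mu \<ge> 0"
    unfolding mu_def using lam eps by simp
  have "real K * (1 - eps) \<le> (real N - real K) * (lam * eps)"
    using N lam eps by (simp add: field_simps)
  moreover have "mu * (1 * lam + 1 * (1 - lam) * (real (Suc N) - real K) - 1)
      = (real N - real K) * (lam * eps) / real K"
    unfolding mu_def using lam K(1) by (simp add: field_simps)
  ultimately have stop: "1 - eps \<le> mu * (1 * lam + 1 * (1 - lam) * (real (Suc N) - real K) - 1)"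
    using K(1) by (simp add: le_divide_eq mult.commute)
  have start: "mu * (lam * (1 - 1) + 1 * (1 - lam) * real K) \<le> lam * eps"
    unfolding mu_def using lam K(1) by simp
  show ?thesis
    using D unit delta lam mu K(2)
    by (intro Fid_ge_of_lagrangian_nonneg[where mu = mu] lagrangian_nonneg_of_endpoints[OF lam _ _ mu start stop])
      auto
qed

text \<open>Here \<open>a = lam powr s\<close> with \<open>s\<close> the fractional part of \<open>log lam delta\<close>, so that
  \<open>delta = a * lam ^ q\<close> exactly, and \<open>mu\<close> makes the condition at \<open>k = 0\<close> an equality; the
  condition at \<open>k = N + 1\<close> then reduces to \<open>log_bound_endpoint_ineq\<close>.\<close>
lemma Fid_ge_of_log_bound:
  assumes q: "real q \<le> log lam delta" "log lam delta < real q + 1"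
    and N: "log lam delta / (lam * eps) - (1 - lam) * real q / lam \<le> real N"
  shows "Fid D psi N delta lam \<ge> 1 - eps"
proof -
  define s where "s = log lam delta - real q"
  have s: "0 \<le> s" "s \<le> 1"
    using q unfolding s_def by auto
  define a where "a = lam powr s"
  have a: "0 < a" "a \<le> 1"
    unfolding a_def using lam powr_mono'[OF s(1), of lam] by simp_all
  have delta_eq: "delta = a * lam ^ q"
  proof -
    have "delta = lam powr (s + real q)"
      unfolding s_def using lam delta by simp
    then show ?thesis
      unfolding a_def using lam by (simp add: powr_add powr_realpow)
  qed
  define c where "c = lam * (1 - a) + a * (1 - lam) * real q"
  have c: "c > 0"
  proof (cases "q = 0")
    case True
    then show ?thesis
      unfolding c_def using delta_eq delta lam by simp
  next
    case False
    then show ?thesis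
      unfolding c_def using a lam by (simp add: add_nonneg_pos)
  qed
  define mu where "mu = lam * eps / c"
  have mu: "mu \<ge> 0"
    unfolding mu_def using lam eps c by simp
  have start: "mu * (lam * (1 - a) + a * (1 - lam) * real q) \<le> lam * eps"
    unfolding mu_def c_def[symmetric] using c by simp
  have "lam * eps * real N \<ge> lam * eps * (log lam delta / (lam * eps) - (1 - lam) * real q / lam)"
    using N lam eps by (intro mult_left_mono) auto
  also have "lam * eps * (log lam delta / (lam * eps) - (1 - lam) * real q / lam)
      = real q + s - eps * (1 - lam) * real q"
    unfolding s_def using lam eps by (simp add: field_simps)
  finally have "(1 - eps) * c \<le> lam * eps * (a * lam + a * (1 - lam) * (real (Suc N) - real q) - 1)"
    unfolding c_def a_def using lam s by (intro log_bound_endpoint_ineq) auto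
  then have stop: "1 - eps \<le> mu * (a * lam + a * (1 - lam) * (real (Suc N) - real q) - 1)"
    unfolding mu_def using c by (simp add: field_simps mult.commute)
  show ?thesis
    using D unit delta lam mu a delta_eq
    by (intro Fid_ge_of_lagrangian_nonneg[where mu = mu] lagrangian_nonneg_of_endpoints[OF lam _ _ mu start stop])
      auto
qed

lemma Fid_lt_of_le_power:
  assumes q: "q \<ge> 1" "delta \<le> lam ^ q" and N: "int N < int q + \<lceil>real q * (1 - eps) / (lam * eps)\<rceil>"
  shows "Fid D psi N delta lam < 1 - eps"
proof (cases "N \<le> q")
  case True
  have "lam ^ q \<le> lam ^ N"
    using True lam by (intro power_decreasing) auto
  then have "delta \<le> lam ^ N"
    using q(2) by linarith
  then have "delta * real (Suc N) \<le> p_coeff lam N (Suc N)"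
    by (simp add: p_coeff_def mult_right_mono mult.commute)
  moreover have "f_coeff lam N (Suc N) < (1 - eps) * p_coeff lam N (Suc N)"
    using lam eps by (simp add: f_coeff_def p_coeff_def)
  ultimately show ?thesis
    using D unit lam delta by (intro Fid_lt_of_two_level_violation[where k = N and t = 1]) auto
next
  case False
  have "int N - int q < \<lceil>real q * (1 - eps) / (lam * eps)\<rceil>"
    using N by simp
  then have "real N - real q < real q * (1 - eps) / (lam * eps)"
    by (simp add: less_ceiling_iff)
  then have "(real N - real q) * (lam * eps) < real q * (1 - eps)"
    using lam eps by (simp add: pos_less_divide_eq)
  then have violation: "eps * lam * (real N - real q) < (1 - eps) * real q"
    by (simp add: mult_ac)
  have "q < N"
    using False by simp
  obtain t where "0 \<le> t" "t \<le> 1"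
    "delta * real (Suc N) \<le> (1 - t) * p_coeff lam N q + t * p_coeff lam N (Suc q)"
    "(1 - t) * f_coeff lam N q + t * f_coeff lam N (Suc q)
      < (1 - eps) * ((1 - t) * p_coeff lam N q + t * p_coeff lam N (Suc q))"
    by (rule two_level_violation_exists[OF lam q(1) \<open>q < N\<close> violation q(2)])
  then show ?thesis
    using D unit lam delta False by (intro Fid_lt_of_two_level_violation[where k = q]) auto
qed

lemma ceiling_bound_ge_1: "\<lceil>log lam delta\<rceil> + \<lceil>of_int \<lceil>log lam delta\<rceil> * (1 - eps) / (lam * eps)\<rceil> \<ge> 1"
proof -
  have "\<lceil>log lam delta\<rceil> \<ge> 1"
    using log_pos by (simp add: le_ceiling_iff)
  moreover from this have "of_int \<lceil>log lam delta\<rceil> * (1 - eps) / (lam * eps) \<ge> 0"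
    using lam eps by simp
  then have "\<lceil>of_int \<lceil>log lam delta\<rceil> * (1 - eps) / (lam * eps)\<rceil> \<ge> 0"
    by (subst le_ceiling_iff) simp
  ultimately show ?thesis
    by linarith
qed

lemma Fid_ge_at_ceiling_bound:
  "Fid D psi (nat (\<lceil>log lam delta\<rceil> + \<lceil>of_int \<lceil>log lam delta\<rceil> * (1 - eps) / (lam * eps)\<rceil>)) delta lam \<ge> 1 - eps"
proof (rule Fid_ge_of_power_le)
  have kp: "\<lceil>log lam delta\<rceil> \<ge> 1"
    using log_pos by (simp add: le_ceiling_iff)
  show "nat \<lceil>log lam delta\<rceil> \<ge> 1"
    using nat_mono[OF kp] by simp
  show "lam ^ nat \<lceil>log lam delta\<rceil> \<le> delta"
    using power_le_of_log_le[OF lam delta(1), of "nat \<lceil>log lam delta\<rceil>"] kp by simp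
  show "real (nat \<lceil>log lam delta\<rceil>) + real (nat \<lceil>log lam delta\<rceil>) * (1 - eps) / (lam * eps)
      \<le> real (nat (\<lceil>log lam delta\<rceil> + \<lceil>of_int \<lceil>log lam delta\<rceil> * (1 - eps) / (lam * eps)\<rceil>))"
    using kp ceiling_bound_ge_1 by simp
qed

lemma Nmin_le_ceiling_bound:
  "int (Nmin D psi eps delta lam) \<le> \<lceil>log lam delta\<rceil> + \<lceil>of_int \<lceil>log lam delta\<rceil> * (1 - eps) / (lam * eps)\<rceil>"
  using Nmin_le[OF _ Fid_ge_at_ceiling_bound] ceiling_bound_ge_1 by linarith

lemma Fid_Nmin: "Fid D psi (Nmin D psi eps delta lam) delta lam \<ge> 1 - eps"
  using Fid_Nmin_ge[OF _ Fid_ge_at_ceiling_bound] ceiling_bound_ge_1 by linarith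

lemma log_bound_pos: "log lam delta / (lam * eps) - (1 - lam) * of_int \<lfloor>log lam delta\<rfloor> / lam > 0"
proof -
  have "eps * (1 - lam) * of_int \<lfloor>log lam delta\<rfloor> \<le> eps * (1 - lam) * log lam delta"
    using eps lam by (intro mult_left_mono) auto
  also have "\<dots> < 1 * log lam delta"
  proof (rule mult_strict_right_mono)
    show "eps * (1 - lam) < 1"
      using mult_strict_mono[of eps 1 "1 - lam" 1] eps lam by simp
  qed (rule log_pos)
  finally show ?thesis
    using lam eps by (simp add: field_simps)
qed

lemma Nmin_le_log_bound:
  "int (Nmin D psi eps delta lam) \<le> \<lceil>log lam delta / (lam * eps) - (1 - lam) * of_int \<lfloor>log lam delta\<rfloor> / lam\<rceil>"
proof -
  let ?x = "log lam delta / (lam * eps) - (1 - lam) * of_int \<lfloor>log lam delta\<rfloor> / lam"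
  have "?x > 0"
    by (rule log_bound_pos)
  then have pos: "\<lceil>?x\<rceil> \<ge> 1"
    by (simp add: le_ceiling_iff)
  have floor_nonneg: "\<lfloor>log lam delta\<rfloor> \<ge> 0"
    using log_pos by simp
  have "Fid D psi (nat \<lceil>?x\<rceil>) delta lam \<ge> 1 - eps"
  proof (rule Fid_ge_of_log_bound[where q = "nat \<lfloor>log lam delta\<rfloor>"])
    show "real (nat \<lfloor>log lam delta\<rfloor>) \<le> log lam delta" "log lam delta < real (nat \<lfloor>log lam delta\<rfloor>) + 1"
      using floor_nonneg by linarith+
    show "log lam delta / (lam * eps) - (1 - lam) * real (nat \<lfloor>log lam delta\<rfloor>) / lam \<le> real (nat \<lceil>?x\<rceil>)"
      using floor_nonneg pos by simp
  qed
  moreover have "nat \<lceil>?x\<rceil> \<ge> 1"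
    using nat_mono[OF pos] by simp
  ultimately have "Nmin D psi eps delta lam \<le> nat \<lceil>?x\<rceil>"
    by (intro Nmin_le)
  then show ?thesis
    using pos by (simp add: le_nat_iff)
qed

lemma floor_bound_le_Nmin:
  "\<lfloor>log lam delta\<rfloor> + \<lceil>of_int \<lfloor>log lam delta\<rfloor> * (1 - eps) / (lam * eps)\<rceil> \<le> int (Nmin D psi eps delta lam)"
proof (rule ccontr)
  define q where "q = nat \<lfloor>log lam delta\<rfloor>"
  have q: "int q = \<lfloor>log lam delta\<rfloor>" "real q = of_int \<lfloor>log lam delta\<rfloor>"
    unfolding q_def using log_pos by simp_all
  assume "\<not> ?thesis"
  then have N: "int (Nmin D psi eps delta lam) < int q + \<lceil>real q * (1 - eps) / (lam * eps)\<rceil>"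
    unfolding q by simp
  then have "q \<ge> 1"
    by (cases q) auto
  moreover have "delta \<le> lam ^ q"
    using le_power_of_le_log[OF lam delta(1)] q(2) by simp
  ultimately have "Fid D psi (Nmin D psi eps delta lam) delta lam < 1 - eps"
    using N by (rule Fid_lt_of_le_power)
  then show False
    using Fid_Nmin by simp
qed

end

theorem theorem3:
  fixes D :: nat and psi :: "nat \<Rightarrow> complex" and eps delta lam :: real
  assumes "D \<ge> 2" and "unit_vec D psi"
    and "0 < eps" "eps < 1" "0 < delta" "delta < 1" "0 < lam" "lam < 1"
  defines "F \<equiv> 1 - eps" and "\<nu> \<equiv> 1 - lam"
    and "kp \<equiv> \<lceil>log lam delta\<rceil>" and "km \<equiv> \<lfloor>log lam delta\<rfloor>"
    and "N \<equiv> Nmin D psi eps delta lam"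
  shows "km + \<lceil>of_int km * F / (lam * eps)\<rceil> \<le> int N
       \<and> int N \<le> kp + \<lceil>of_int kp * F / (lam * eps)\<rceil>
       \<and> int N \<le> \<lceil>log lam delta / (lam * eps) - \<nu> * of_int km / lam\<rceil>
       \<and> \<lceil>log lam delta / (lam * eps) - \<nu> * of_int km / lam\<rceil>
           = \<lceil>ln delta / (lam * eps * ln lam) - \<nu> * of_int km / lam\<rceil>
       \<and> (log lam delta \<in> \<int> \<longrightarrow>
            int N = km + \<lceil>of_int km * F / (lam * eps)\<rceil>
          \<and> int N = kp + \<lceil>of_int kp * F / (lam * eps)\<rceil>
          \<and> int N = \<lceil>log lam delta / (lam * eps) - \<nu> * of_int km / lam\<rceil>)"
proof -
  note lower = floor_bound_le_Nmin[OF assms(1-8)]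
    and upper_ceiling = Nmin_le_ceiling_bound[OF assms(1-8)]
    and upper_log = Nmin_le_log_bound[OF assms(1-8)]
  have ln_form: "\<lceil>log lam delta / (lam * eps) - \<nu> * of_int km / lam\<rceil>
      = \<lceil>ln delta / (lam * eps * ln lam) - \<nu> * of_int km / lam\<rceil>"
    by (simp add: log_def mult_ac)
  have "kp = km" if "log lam delta \<in> \<int>"
    using that unfolding kp_def km_def by (auto elim: Ints_cases)
  moreover have "\<lceil>log lam delta / (lam * eps) - \<nu> * of_int km / lam\<rceil> = km + \<lceil>of_int km * F / (lam * eps)\<rceil>"
    if "log lam delta \<in> \<int>"
    unfolding km_def \<nu>_def F_def using assms(7,3) that by (rule log_bound_eq_floor_bound)
  ultimately show ?thesis
    using lower upper_ceiling upper_log ln_form unfolding F_def \<nu>_def kp_def km_def N_def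
    by auto
qed

end
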